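(* For every integer $n\ge1$, the number of permutations $\pi\in S_n$ whose number of alignments equals $(k-1)(n-k)$, where $k$ is the number of weak excedences of $\pi$ (i.e. which have the maximal number of alignments given their number of weak excedences), is the Catalan number $C_n=\frac1n\binom{2n}{n+1}$.
   Context: Place $1,\dots,n$ clockwise on a circle. Distinct $p_1,\dots,p_m$ are in clockwise cyclic order if $(p_2-p_1)\bmod n<\dots<(p_m-p_1)\bmod n$ (residues in $\{0,\dots,n-1\}$). For $\pi\in S_n$ (fixed points regarded as "counterclockwise loops"), an ordered pair $(i,j)$, $i\ne j$, is aligned if $\pi(j)\ne j$, the entries of $(i,\pi(i),\pi(j),j)$ are pairwise distinct except that possibly $i=\pi(i)$, and the distinct entries in this order are in clockwise cyclic order. An alignment is an unordered pair $\{i,j\}$ with $(i,j)$ or $(j,i)$ aligned. A weak excedence of $\pi$ is an $i$ with $\pi(i)\ge i$. For a permutation with $k$ weak excedences, $(k-1)(n-k)$ is the maximum possible number of alignments. *)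

theory Defs
  imports Complex_Main "HOL-Combinatorics.Permutations"
begin

text \<open>Points 1..n on a circle. A list of distinct points p1,...,pm is in clockwise
cyclic order if (p2-p1) mod n < ... < (pm-p1) mod n (residues in 0..n-1).\<close>
definition cyc_ord :: "nat \<Rightarrow> nat list \<Rightarrow> bool" where
  "cyc_ord n xs \<longleftrightarrow> distinct xs \<and>
     sorted_wrt (<) (map (\<lambda>x. (int x - int (hd xs)) mod int n) (tl xs))"

text \<open>Ordered pair (i,j) aligned for the permutation pi (fixed points are
counterclockwise loops): i \<noteq> j, pi j \<noteq> j, entries of (i, pi i, pi j, j) pairwise
distinct except possibly i = pi i, and the distinct entries are in clockwise cyclic order.\<close>
definition aligned :: "nat \<Rightarrow> (nat \<Rightarrow> nat) \<Rightarrow> nat \<Rightarrow> nat \<Rightarrow> bool" where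
  "aligned n \<pi> i j \<longleftrightarrow> i \<noteq> j \<and> \<pi> j \<noteq> j \<and>
     cyc_ord n (if \<pi> i = i then [i, \<pi> j, j] else [i, \<pi> i, \<pi> j, j])"

definition alignments :: "nat \<Rightarrow> (nat \<Rightarrow> nat) \<Rightarrow> nat set set" where
  "alignments n \<pi> = {{i, j} | i j. i \<in> {1..n} \<and> j \<in> {1..n} \<and> aligned n \<pi> i j}"

definition weak_excedences :: "nat \<Rightarrow> (nat \<Rightarrow> nat) \<Rightarrow> nat set" where
  "weak_excedences n \<pi> = {i \<in> {1..n}. \<pi> i \<ge> i}"

end

theory Submission
  imports Defs
begin

(* Let k be the number of weak excedences of a permutation p of {1..n} and let
   align_gap n p = (k - 1) (n - k) - #alignments.  Deleting n + 1 from its cycle turns p into a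
   permutation s of {1..n}.  If p fixes n + 1 the gap does not change; otherwise, with
   p q = n + 1 and r = p (n + 1), it drops by 2 #{j < q. r < p j} if q <= r and by
   1 + 2 #{j > q. p j < r} if r < q.  By induction the gap is nonnegative, and p attains the
   bound iff s does and either p fixes n + 1 or q is a weak left-to-right record of s.
   Hence the extremal permutations of size n + 1 arise from those of size n by fixing n + 1 or
   by inserting it right after a record q; the result has 1 + #records(s) records in the first
   case and 1 + #{records of s below q} in the second.  The number T n t of
   extremal permutations with at least t records therefore satisfies the ballot recurrence
   T (n + 1) t = T n (t - 1) + T (n + 1) (t + 1), so T n t = C(2n - t, n) - C(2n - t, n + 1),
   and T n 0 is the Catalan number. *)

lemma card_symmetric_pairs:
  fixes A :: "'a::linorder set"
  assumes "finite A" and sym: "\<And>x y. R x y \<Longrightarrow> R y x" and irrefl: "\<And>x. \<not> R x x"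
  shows "card {(x, y) \<in> A \<times> A. R x y} = 2 * card {{x, y} | x y. x \<in> A \<and> y \<in> A \<and> R x y}"
proof -
  define Lo where "Lo = {(x, y) \<in> A \<times> A. R x y \<and> x < y}"
  define Hi where "Hi = {(x, y) \<in> A \<times> A. R x y \<and> y < x}"
  have split: "{(x, y) \<in> A \<times> A. R x y} = Lo \<union> Hi"
    unfolding Lo_def Hi_def using irrefl by (auto, metis linorder_neqE)
  have "card (Lo \<union> Hi) = card Lo + card Hi"
    by (rule card_Un_disjoint)
      (use assms(1) in \<open>auto simp: Lo_def Hi_def intro: rev_finite_subset[of "A \<times> A"]\<close>)
  moreover have "bij_betw prod.swap Lo Hi"
    unfolding Lo_def Hi_def bij_betw_def by (auto simp: sym image_iff intro!: inj_onI)
  then have "card Hi = card Lo" by (simp add: bij_betw_same_card)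
  moreover have "bij_betw (\<lambda>(x, y). {x, y}) Lo {{x, y} | x y. x \<in> A \<and> y \<in> A \<and> R x y}"
  proof (rule bij_betwI')
    fix u v assume "u \<in> Lo" "v \<in> Lo"
    then show "((case u of (x, y) \<Rightarrow> {x, y}) = (case v of (x, y) \<Rightarrow> {x, y})) = (u = v)"
      unfolding Lo_def by (auto simp: doubleton_eq_iff)
  next
    fix u assume "u \<in> Lo"
    then show "(case u of (x, y) \<Rightarrow> {x, y}) \<in> {{x, y} | x y. x \<in> A \<and> y \<in> A \<and> R x y}"
      unfolding Lo_def by auto
  next
    fix e assume "e \<in> {{x, y} | x y. x \<in> A \<and> y \<in> A \<and> R x y}"
    then obtain x y where e: "e = {x, y}" "x \<in> A" "y \<in> A" "R x y" by blast
    have "x \<noteq> y" using irrefl e(4) by blast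
    then consider "(x, y) \<in> Lo" | "(y, x) \<in> Lo"
      using e sym unfolding Lo_def by (auto simp: neq_iff)
    then show "\<exists>u\<in>Lo. e = (case u of (x, y) \<Rightarrow> {x, y})"
      by cases (force simp: e(1) insert_commute)+
  qed
  then have "card Lo = card {{x, y} | x y. x \<in> A \<and> y \<in> A \<and> R x y}"
    by (rule bij_betw_same_card)
  ultimately show ?thesis
    using split by simp
qed

lemma double_sum_insert:
  fixes F :: "'a \<Rightarrow> 'a \<Rightarrow> 'b::comm_monoid_add"
  assumes "finite I" "N \<notin> I"
  shows "(\<Sum>i\<in>insert N I. \<Sum>j\<in>insert N I. F i j)
       = (\<Sum>i\<in>I. \<Sum>j\<in>I. F i j) + (\<Sum>j\<in>I. F N j + F j N) + F N N"
  using assms by (simp add: sum.distrib algebra_simps)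

lemma double_sum_cross:
  fixes H :: "'a \<Rightarrow> 'a \<Rightarrow> 'b::comm_ring_1"
  assumes "finite I" "q \<in> I"
    and zero: "\<And>i j. i \<in> I \<Longrightarrow> j \<in> I \<Longrightarrow> i \<noteq> q \<Longrightarrow> j \<noteq> q \<Longrightarrow> H i j = 0"
    and sym: "\<And>i j. H i j = H j i"
  shows "(\<Sum>i\<in>I. \<Sum>j\<in>I. H i j) = 2 * (\<Sum>j\<in>I. H q j) - H q q"
proof -
  have col: "(\<Sum>j\<in>I. H i j) = H i q" if "i \<in> I - {q}" for i
  proof -
    have "(\<Sum>j\<in>I - {q}. H i j) = 0" using zero that by (intro sum.neutral) auto
    then show ?thesis using sum.remove[OF assms(1,2), of "H i"] by simp
  qed
  have "(\<Sum>i\<in>I. \<Sum>j\<in>I. H i j) = (\<Sum>j\<in>I. H q j) + (\<Sum>i\<in>I - {q}. H i q)"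
    using sum.remove[OF assms(1,2), of "\<lambda>i. \<Sum>j\<in>I. H i j"] col by simp
  also have "(\<Sum>i\<in>I - {q}. H i q) = (\<Sum>j\<in>I - {q}. H q j)"
    by (rule sum.cong[OF refl]) (rule sym)
  also have "\<dots> = (\<Sum>j\<in>I. H q j) - H q q"
    using sum.remove[OF assms(1,2), of "H q"] by (simp add: algebra_simps)
  finally show ?thesis by (simp add: algebra_simps)
qed

lemma card_le_add_card_less:
  fixes f :: "'a::linorder \<Rightarrow> 'a"
  assumes "finite A"
  shows "card {j\<in>A. j \<le> f j} + card {j\<in>A. f j < j} = card A"
proof -
  have "card ({j\<in>A. j \<le> f j} \<union> {j\<in>A. f j < j}) = card {j\<in>A. j \<le> f j} + card {j\<in>A. f j < j}"
    by (rule card_Un_disjoint) (use assms in auto)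
  moreover have "{j\<in>A. j \<le> f j} \<union> {j\<in>A. f j < j} = A" by auto
  ultimately show ?thesis by simp
qed

definition rank :: "'a::linorder set \<Rightarrow> 'a \<Rightarrow> nat" where
  "rank L x = card {y\<in>L. y < x}"

lemma rank_strict_mono:
  assumes "finite L" "x \<in> L" "x < y"
  shows "rank L x < rank L y"
  unfolding rank_def
  by (rule psubset_card_mono) (use assms in auto)

lemma bij_betw_rank:
  assumes "finite L"
  shows "bij_betw (rank L) L {..<card L}"
proof -
  have inj: "inj_on (rank L) L"
    by (rule inj_onI) (metis assms linorder_neqE less_irrefl rank_strict_mono)
  have "rank L x < card L" if "x \<in> L" for x
    unfolding rank_def by (rule psubset_card_mono) (use assms that in auto)
  then have "rank L ` L \<subseteq> {..<card L}" by auto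
  moreover have "card (rank L ` L) = card {..<card L}"
    using card_image[OF inj] by simp
  ultimately have "rank L ` L = {..<card L}"
    by (simp add: card_subset_eq)
  with inj show ?thesis unfolding bij_betw_def by simp
qed

lemma Suc_times_binomial_double: "Suc n * ((2 * n) choose Suc n) = n * ((2 * n) choose n)"
proof -
  have lhs: "Suc n * ((2 * n) choose Suc n) = 2 * n * ((2 * n - 1) choose n)"
    by (rule binomial_absorption)
  have rhs: "n * ((2 * n) choose n) = 2 * n * ((2 * n - 1) choose n)"
    using binomial_absorb_comp[of "2 * n" n] by simp
  show ?thesis
    by (simp only: lhs rhs)
qed


section \<open>Alignments in terms of the linear order\<close>

lemma int_diff_mod_eq:
  assumes "1 \<le> x" "x \<le> m" "1 \<le> y" "y \<le> m"
  shows "(int y - int x) mod int m = (if x \<le> y then int y - int x else int y - int x + int m)"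
proof (cases "x \<le> y")
  case True
  then show ?thesis using assms by (auto intro!: mod_pos_pos_trivial)
next
  case False
  have "(int y - int x + int m) mod int m = int y - int x + int m"
    by (rule mod_pos_pos_trivial) (use assms False in auto)
  then show ?thesis using False mod_add_self2[of "int y - int x" "int m"] by simp
qed

definition cyclic3 :: "'a::linorder \<Rightarrow> 'a \<Rightarrow> 'a \<Rightarrow> bool" where
  "cyclic3 x y z \<longleftrightarrow> x < y \<and> y < z \<or> y < z \<and> z < x \<or> z < x \<and> x < y"

definition cyclic4 :: "'a::linorder \<Rightarrow> 'a \<Rightarrow> 'a \<Rightarrow> 'a \<Rightarrow> bool" where
  "cyclic4 a b c d \<longleftrightarrow>
     a < b \<and> b < c \<and> c < d \<or> b < c \<and> c < d \<and> d < a \<or>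
     c < d \<and> d < a \<and> a < b \<or> d < a \<and> a < b \<and> b < c"

lemma cyc_ord_3_iff:
  assumes "x \<in> {1..m}" "y \<in> {1..m}" "z \<in> {1..m}"
  shows "cyc_ord m [x, y, z] \<longleftrightarrow> cyclic3 x y z"
  using assms unfolding cyc_ord_def cyclic3_def by (auto simp: int_diff_mod_eq)

lemma cyc_ord_4_iff:
  assumes "a \<in> {1..m}" "b \<in> {1..m}" "c \<in> {1..m}" "d \<in> {1..m}"
  shows "cyc_ord m [a, b, c, d] \<longleftrightarrow> cyclic4 a b c d"
  using assms unfolding cyc_ord_def cyclic4_def by (auto simp: int_diff_mod_eq)

definition aligned_ord :: "(nat \<Rightarrow> nat) \<Rightarrow> nat \<Rightarrow> nat \<Rightarrow> bool" where
  "aligned_ord p i j \<longleftrightarrow> i \<noteq> j \<and> p j \<noteq> j \<and>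
     (if p i = i then cyclic3 i (p j) j else cyclic4 i (p i) (p j) j)"

lemma aligned_iff_aligned_ord:
  assumes "p permutes {1..m}" "i \<in> {1..m}" "j \<in> {1..m}"
  shows "aligned m p i j \<longleftrightarrow> aligned_ord p i j"
proof -
  have "p i \<in> {1..m}" "p j \<in> {1..m}"
    using assms permutes_in_image[OF assms(1)] by simp_all
  then show ?thesis
    using assms unfolding aligned_def aligned_ord_def by (simp add: cyc_ord_3_iff cyc_ord_4_iff)
qed

definition align_ind :: "(nat \<Rightarrow> nat) \<Rightarrow> nat \<Rightarrow> nat \<Rightarrow> int" where
  "align_ind p i j = of_bool (aligned_ord p i j \<or> aligned_ord p j i)"

lemma align_ind_commute: "align_ind p i j = align_ind p j i"
  unfolding align_ind_def by auto

lemma align_ind_self [simp]: "align_ind p i i = 0"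
  unfolding align_ind_def aligned_ord_def by simp

definition align_sum :: "nat \<Rightarrow> (nat \<Rightarrow> nat) \<Rightarrow> int" where
  "align_sum m p = (\<Sum>i\<in>{1..m}. \<Sum>j\<in>{1..m}. align_ind p i j)"

lemma align_sum_eq_card_alignments:
  assumes "p permutes {1..m}"
  shows "align_sum m p = 2 * int (card (alignments m p))"
proof -
  let ?R = "\<lambda>i j. aligned_ord p i j \<or> aligned_ord p j i"
  have "alignments m p = {{i, j} | i j. i \<in> {1..m} \<and> j \<in> {1..m} \<and> ?R i j}"
  proof -
    have "alignments m p = {{i, j} | i j. i \<in> {1..m} \<and> j \<in> {1..m} \<and> aligned_ord p i j}"
      unfolding alignments_def using aligned_iff_aligned_ord[OF assms] by blast
    also have "\<dots> = {{i, j} | i j. i \<in> {1..m} \<and> j \<in> {1..m} \<and> ?R i j}"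
      by (auto; metis insert_commute)
    finally show ?thesis .
  qed
  moreover have "align_sum m p = (\<Sum>u\<in>{1..m} \<times> {1..m}. of_bool (?R (fst u) (snd u)))"
    unfolding align_sum_def align_ind_def sum.cartesian_product by (simp add: case_prod_beta)
  moreover have "\<dots> = int (card {(i, j) \<in> {1..m} \<times> {1..m}. ?R i j})"
  proof -
    have "{(i, j) \<in> {1..m} \<times> {1..m}. ?R i j} = {1..m} \<times> {1..m} \<inter> {u. ?R (fst u) (snd u)}"
      by auto
    then show ?thesis by (simp del: of_bool_or_iff)
  qed
  moreover have "card {(i, j) \<in> {1..m} \<times> {1..m}. ?R i j}
      = 2 * card {{i, j} | i j. i \<in> {1..m} \<and> j \<in> {1..m} \<and> ?R i j}"
    by (rule card_symmetric_pairs) (auto simp: aligned_ord_def)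
  ultimately show ?thesis by simp
qed

section \<open>Removing the maximum\<close>

text \<open>Deletes \<open>N\<close> from its cycle: the preimage of \<open>N\<close> is sent to \<open>p N\<close>.\<close>

definition remove_max :: "nat \<Rightarrow> (nat \<Rightarrow> nat) \<Rightarrow> nat \<Rightarrow> nat" where
  "remove_max N p = transpose N (p N) \<circ> p"

lemma remove_max_apply:
  "remove_max N p i = (if p i = N then p N else if p i = p N then N else p i)"
  unfolding remove_max_def by (simp add: transpose_def)

lemma interval_Suc_insert: "{1..Suc n} = insert (Suc n) {1..n}"
  by auto

lemma remove_max_permutes: "p permutes {1..Suc n} \<Longrightarrow> remove_max (Suc n) p permutes {1..n}"
  unfolding remove_max_def interval_Suc_insert by (rule permutes_insert_lemma)

lemma remove_max_fixed: "p (Suc n) = Suc n \<Longrightarrow> remove_max (Suc n) p = p"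
  unfolding remove_max_def by simp

definition align_gap :: "nat \<Rightarrow> (nat \<Rightarrow> nat) \<Rightarrow> int" where
  "align_gap m p =
     (int (card (weak_excedences m p)) - 1) * (int m - int (card (weak_excedences m p)))
     - int (card (alignments m p))"

lemma align_gap_via_sum:
  assumes "p permutes {1..m}"
  shows "2 * align_gap m p
    = 2 * (int (card (weak_excedences m p)) - 1) * (int m - int (card (weak_excedences m p)))
      - align_sum m p"
  unfolding align_gap_def align_sum_eq_card_alignments[OF assms] by (simp add: algebra_simps)

lemma align_sum_fixed_max:
  assumes "p permutes {1..n}"
  shows "align_sum (Suc n) p = align_sum n p + 2 * int (card {j\<in>{1..n}. p j < j})"
proof -
  let ?I = "{1..n}" and ?N = "Suc n"
  have p_N: "p ?N = ?N" using assms by (simp add: permutes_not_in)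
  have p_in: "p j \<in> ?I" if "j \<in> ?I" for j using permutes_in_image[OF assms] that by simp
  have "align_ind p j ?N = of_bool (p j < j)" if "j \<in> ?I" for j
    using that p_in[OF that] p_N unfolding align_ind_def aligned_ord_def cyclic3_def by auto
  then have last: "align_ind p ?N j + align_ind p j ?N = 2 * of_bool (p j < j)" if "j \<in> ?I" for j
    using that align_ind_commute[of p ?N j] by simp
  have "align_sum ?N p = align_sum n p + (\<Sum>j\<in>?I. align_ind p ?N j + align_ind p j ?N)
      + align_ind p ?N ?N"
    unfolding align_sum_def interval_Suc_insert by (rule double_sum_insert) auto
  also have "(\<Sum>j\<in>?I. align_ind p ?N j + align_ind p j ?N) = (\<Sum>j\<in>?I. 2 * of_bool (p j < j))"
    using last by (rule sum.cong[OF refl])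
  also have "\<dots> = 2 * int (card {j\<in>?I. p j < j})"
    by (simp add: sum_distrib_left[symmetric] Int_def)
  finally show ?thesis
    by simp
qed

lemma align_gap_fixed_max:
  assumes "p permutes {1..n}"
  shows "align_gap (Suc n) p = align_gap n p"
proof -
  let ?I = "{1..n}" and ?N = "Suc n"
  have p_N: "p ?N = ?N" using assms by (simp add: permutes_not_in)
  have p_Suc: "p permutes {1..?N}" using assms by (rule permutes_subset) auto
  have wex: "weak_excedences ?N p = insert ?N (weak_excedences n p)"
    unfolding weak_excedences_def using p_N by auto
  have "?N \<notin> weak_excedences n p" unfolding weak_excedences_def by auto
  then have k: "int (card (weak_excedences ?N p)) = int (card (weak_excedences n p)) + 1"
    unfolding wex by (simp add: weak_excedences_def)
  have c: "int (card {j\<in>?I. p j < j}) = int n - int (card (weak_excedences n p))"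
    using card_le_add_card_less[of ?I p] unfolding weak_excedences_def by simp
  define k where "k = int (card (weak_excedences n p))"
  define A where "A = align_sum n p"
  have "2 * align_gap ?N p = 2 * (k + 1 - 1) * (int n + 1 - (k + 1)) - (A + 2 * (int n - k))"
    unfolding align_gap_via_sum[OF p_Suc] align_sum_fixed_max[OF assms] k c k_def A_def by simp
  also have "\<dots> = 2 * (k - 1) * (int n - k) - A"
    by (simp add: algebra_simps)
  also have "\<dots> = 2 * align_gap n p"
    unfolding align_gap_via_sum[OF assms] k_def A_def ..
  finally show ?thesis by linarith
qed

locale max_moved =
  fixes n :: nat and p :: "nat \<Rightarrow> nat" and q :: nat
  assumes perm: "p permutes {1..Suc n}" and p_q: "p q = Suc n" and q_ne: "q \<noteq> Suc n"
begin

abbreviation r :: nat where "r \<equiv> p (Suc n)"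

abbreviation s :: "nat \<Rightarrow> nat" where "s \<equiv> remove_max (Suc n) p"

lemma p_eq_iff: "p i = p j \<longleftrightarrow> i = j"
  using permutes_inj[OF perm] by (auto dest: injD)

lemma p_in: "i \<in> {1..Suc n} \<Longrightarrow> p i \<in> {1..Suc n}"
  using permutes_in_image[OF perm] by simp

lemma q_in: "q \<in> {1..n}"
proof -
  have "q \<in> {1..Suc n}"
    using permutes_not_in[OF perm, of q] p_q q_ne by auto
  then show ?thesis using q_ne by auto
qed

lemma r_in: "r \<in> {1..n}"
  using p_in[of "Suc n"] p_eq_iff[of "Suc n" q] p_q q_ne by auto

lemma s_q: "s q = r"
  unfolding remove_max_apply using p_q by simp

lemma s_other: "j \<noteq> q \<Longrightarrow> j \<noteq> Suc n \<Longrightarrow> s j = p j"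
  unfolding remove_max_apply using p_q p_eq_iff[of j q] p_eq_iff[of j "Suc n"] by auto

lemma p_other: "j \<in> {1..n} \<Longrightarrow> j \<noteq> q \<Longrightarrow> p j \<in> {1..n} \<and> p j \<noteq> r"
  using p_in[of j] p_eq_iff[of j q] p_eq_iff[of j "Suc n"] p_q by auto

lemma weak_excedences_Suc: "weak_excedences (Suc n) p = {j\<in>{1..n}. j \<le> p j}"
  using r_in unfolding weak_excedences_def by (auto simp: le_Suc_eq)

lemma weak_excedences_remove_max:
  "weak_excedences n s = {j\<in>{1..n}. j \<le> p j} - (if q \<le> r then {} else {q})"
proof (rule set_eqI)
  fix x
  show "x \<in> weak_excedences n s \<longleftrightarrow> x \<in> {j\<in>{1..n}. j \<le> p j} - (if q \<le> r then {} else {q})"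
    using s_q s_other[of x] q_in p_q unfolding weak_excedences_def by (cases "x = q") auto
qed

lemma align_ind_max_moved: "align_ind p q (Suc n) = 0"
  using q_in r_in p_q unfolding align_ind_def aligned_ord_def cyclic4_def by auto

lemma align_sum_remove_max:
  "align_sum (Suc n) p = align_sum n s
     + 2 * (\<Sum>j\<in>{1..n} - {q}. align_ind p q j - align_ind s q j + align_ind p j (Suc n))"
proof -
  let ?I = "{1..n}" and ?N = "Suc n"
  let ?D = "\<lambda>i j. align_ind p i j - align_ind s i j"
  have agree: "?D i j = 0" if "i \<in> ?I" "j \<in> ?I" "i \<noteq> q" "j \<noteq> q" for i j
    using that s_other[of i] s_other[of j] unfolding align_ind_def aligned_ord_def by simp
  have "align_sum ?N p = (\<Sum>i\<in>?I. \<Sum>j\<in>?I. align_ind p i j)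
      + (\<Sum>j\<in>?I. align_ind p ?N j + align_ind p j ?N) + align_ind p ?N ?N"
    unfolding align_sum_def interval_Suc_insert by (rule double_sum_insert) auto
  also have "(\<Sum>i\<in>?I. \<Sum>j\<in>?I. align_ind p i j) = align_sum n s + (\<Sum>i\<in>?I. \<Sum>j\<in>?I. ?D i j)"
    unfolding align_sum_def by (simp add: sum_subtractf)
  also have "(\<Sum>i\<in>?I. \<Sum>j\<in>?I. ?D i j) = 2 * (\<Sum>j\<in>?I. ?D q j) - ?D q q"
    by (rule double_sum_cross[OF _ q_in agree]) (auto simp: align_ind_commute)
  also have "(\<Sum>j\<in>?I. align_ind p ?N j + align_ind p j ?N) = 2 * (\<Sum>j\<in>?I. align_ind p j ?N)"
    unfolding sum.distrib align_ind_commute[of p ?N] by linarith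
  finally have "align_sum ?N p = align_sum n s + 2 * (\<Sum>j\<in>?I. ?D q j + align_ind p j ?N)"
    by (simp add: sum.distrib sum_subtractf algebra_simps)
  also have "(\<Sum>j\<in>?I. ?D q j + align_ind p j ?N) = (\<Sum>j\<in>?I - {q}. ?D q j + align_ind p j ?N)"
    using sum.remove[OF _ q_in, of "\<lambda>j. ?D q j + align_ind p j ?N"]
      align_ind_max_moved align_ind_commute[of p q ?N] by simp
  finally show ?thesis .
qed

lemma align_increment_if_le:
  assumes "q \<le> r" "j \<in> {1..n}" "j \<noteq> q"
  shows "align_ind p q j - align_ind s q j + align_ind p j (Suc n)
       = of_bool (j \<le> p j) - 2 * of_bool (j < q \<and> r < p j)"
proof -
  have "p j \<in> {1..n}" "p j \<noteq> r" "s j = p j"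
    using p_other[of j] s_other[of j] assms(2,3) by auto
  then show ?thesis
    using assms q_in r_in p_q s_q
    unfolding align_ind_def aligned_ord_def cyclic3_def cyclic4_def by auto
qed

lemma align_increment_if_gt:
  assumes "r < q" "j \<in> {1..n}" "j \<noteq> q"
  shows "align_ind p q j - align_ind s q j + align_ind p j (Suc n)
       = of_bool (p j < j) - 2 * of_bool (q < j \<and> p j < r)"
proof -
  have "p j \<in> {1..n}" "p j \<noteq> r" "s j = p j"
    using p_other[of j] s_other[of j] assms(2,3) by auto
  then show ?thesis
    using assms q_in r_in p_q s_q
    unfolding align_ind_def aligned_ord_def cyclic3_def cyclic4_def by auto
qed

lemma align_gap_remove_max_if_le:
  assumes "q \<le> r"
  shows "align_gap (Suc n) p = align_gap n s + 2 * int (card {j\<in>{1..n}. j < q \<and> r < p j})"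
proof -
  define W where "W = {j\<in>{1..n} - {q}. j \<le> p j}"
  define B where "B = {j\<in>{1..n} - {q}. j < q \<and> r < p j}"
  have W: "q \<notin> W" "finite W" "{j\<in>{1..n}. j \<le> p j} = insert q W"
    using q_in p_q unfolding W_def by auto
  then have "weak_excedences (Suc n) p = insert q W" "weak_excedences n s = insert q W"
    unfolding weak_excedences_Suc weak_excedences_remove_max using assms by simp_all
  then have k: "int (card (weak_excedences (Suc n) p)) = int (card W) + 1"
      "int (card (weak_excedences n s)) = int (card W) + 1"
    using W by simp_all
  have "(\<Sum>j\<in>{1..n} - {q}. align_ind p q j - align_ind s q j + align_ind p j (Suc n))
      = (\<Sum>j\<in>{1..n} - {q}. of_bool (j \<le> p j) - 2 * of_bool (j < q \<and> r < p j))"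
    using align_increment_if_le[OF assms] by (intro sum.cong) auto
  also have "\<dots> = int (card W) - 2 * int (card B)"
    by (simp add: sum_subtractf sum_distrib_left[symmetric] W_def B_def Int_def)
  finally have sums: "align_sum (Suc n) p = align_sum n s + 2 * (int (card W) - 2 * int (card B))"
    using align_sum_remove_max by simp
  define k A where "k = int (card W)" and "A = align_sum n s"
  have gp: "2 * align_gap (Suc n) p
      = 2 * (k + 1 - 1) * (int n + 1 - (k + 1)) - (A + 2 * (k - 2 * int (card B)))"
    unfolding align_gap_via_sum[OF perm] sums k k_def A_def by simp
  have gs: "2 * align_gap n s = 2 * (k + 1 - 1) * (int n - (k + 1)) - A"
    unfolding align_gap_via_sum[OF remove_max_permutes[OF perm]] k k_def A_def by simp
  have "2 * (k + 1 - 1) * (int n + 1 - (k + 1)) - (A + 2 * (k - 2 * int (card B)))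
      = 2 * (k + 1 - 1) * (int n - (k + 1)) - A + 4 * int (card B)"
    by (simp add: algebra_simps)
  then have "align_gap (Suc n) p = align_gap n s + 2 * int (card B)"
    using gp gs by linarith
  moreover have "B = {j\<in>{1..n}. j < q \<and> r < p j}" by (auto simp: B_def)
  ultimately show ?thesis by simp
qed

lemma align_gap_remove_max_if_gt:
  assumes "r < q"
  shows "align_gap (Suc n) p = align_gap n s + 1 + 2 * int (card {j\<in>{1..n}. q < j \<and> p j < r})"
proof -
  define W where "W = {j\<in>{1..n} - {q}. j \<le> p j}"
  define T where "T = {j\<in>{1..n} - {q}. p j < j}"
  define B where "B = {j\<in>{1..n} - {q}. q < j \<and> p j < r}"
  have W: "q \<notin> W" "finite W" "{j\<in>{1..n}. j \<le> p j} = insert q W"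
    using q_in p_q unfolding W_def by auto
  then have "weak_excedences (Suc n) p = insert q W" "weak_excedences n s = W"
    unfolding weak_excedences_Suc weak_excedences_remove_max using assms by simp_all
  then have k: "int (card (weak_excedences (Suc n) p)) = int (card W) + 1"
      "int (card (weak_excedences n s)) = int (card W)"
    using W by simp_all
  have WT: "card W + card T + 1 = n"
    using card_le_add_card_less[of "{1..n} - {q}" p] q_in unfolding W_def T_def by simp
  have t: "int (card T) = int n - 1 - int (card W)"
    using arg_cong[OF WT, of int] by simp
  have "(\<Sum>j\<in>{1..n} - {q}. align_ind p q j - align_ind s q j + align_ind p j (Suc n))
      = (\<Sum>j\<in>{1..n} - {q}. of_bool (p j < j) - 2 * of_bool (q < j \<and> p j < r))"
    using align_increment_if_gt[OF assms] by (intro sum.cong) auto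
  also have "\<dots> = int (card T) - 2 * int (card B)"
    by (simp add: sum_subtractf sum_distrib_left[symmetric] T_def B_def Int_def)
  finally have sums: "align_sum (Suc n) p = align_sum n s + 2 * (int (card T) - 2 * int (card B))"
    using align_sum_remove_max by simp
  define k A where "k = int (card W)" and "A = align_sum n s"
  have gp: "2 * align_gap (Suc n) p
      = 2 * (k + 1 - 1) * (int n + 1 - (k + 1)) - (A + 2 * (int n - 1 - k - 2 * int (card B)))"
    unfolding align_gap_via_sum[OF perm] sums k t k_def A_def by simp
  have gs: "2 * align_gap n s = 2 * (k - 1) * (int n - k) - A"
    unfolding align_gap_via_sum[OF remove_max_permutes[OF perm]] k k_def A_def by simp
  have "2 * (k + 1 - 1) * (int n + 1 - (k + 1)) - (A + 2 * (int n - 1 - k - 2 * int (card B)))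
      = 2 * (k - 1) * (int n - k) - A + 2 + 4 * int (card B)"
    by (simp add: algebra_simps)
  then have "align_gap (Suc n) p = align_gap n s + 1 + 2 * int (card B)"
    using gp gs by linarith
  moreover have "B = {j\<in>{1..n}. q < j \<and> p j < r}" by (auto simp: B_def)
  ultimately show ?thesis by simp
qed

end

definition max_at_record :: "nat \<Rightarrow> (nat \<Rightarrow> nat) \<Rightarrow> bool" where
  "max_at_record N p \<longleftrightarrow> (\<forall>q\<in>{1..<N}. p q = N \<longrightarrow> q \<le> p N \<and> (\<forall>j\<in>{1..<q}. p j < p N))"

context max_moved
begin

lemma max_at_record_iff: "max_at_record (Suc n) p \<longleftrightarrow> q \<le> r \<and> (\<forall>j\<in>{1..<q}. p j < r)"
proof
  assume "max_at_record (Suc n) p"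
  moreover have "q \<in> {1..<Suc n}" using q_in by auto
  ultimately show "q \<le> r \<and> (\<forall>j\<in>{1..<q}. p j < r)"
    using p_q unfolding max_at_record_def by blast
next
  assume "q \<le> r \<and> (\<forall>j\<in>{1..<q}. p j < r)"
  moreover have "q' = q" if "p q' = Suc n" for q'
    using that p_q p_eq_iff[of q' q] by simp
  ultimately show "max_at_record (Suc n) p"
    unfolding max_at_record_def by blast
qed

lemma align_gap_remove_max_le: "align_gap n s \<le> align_gap (Suc n) p"
  using align_gap_remove_max_if_le align_gap_remove_max_if_gt by (cases "q \<le> r") auto

lemma align_gap_remove_max_eq_iff:
  "align_gap (Suc n) p = align_gap n s \<longleftrightarrow> max_at_record (Suc n) p"
proof (cases "q \<le> r")
  case True
  have "\<not> r < p j \<longleftrightarrow> p j < r" if "j \<in> {1..<q}" for j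
    using that q_in p_other[of j] by auto
  moreover have "{j\<in>{1..n}. j < q \<and> r < p j} = {j\<in>{1..<q}. r < p j}"
    using q_in by auto
  ultimately have "{j\<in>{1..n}. j < q \<and> r < p j} = {} \<longleftrightarrow> (\<forall>j\<in>{1..<q}. p j < r)"
    by blast
  then show ?thesis
    using align_gap_remove_max_if_le[OF True] max_at_record_iff True by simp
next
  case False
  then show ?thesis
    using align_gap_remove_max_if_gt max_at_record_iff by simp
qed

end

lemma obtain_max_moved:
  assumes "p permutes {1..Suc n}" "p (Suc n) \<noteq> Suc n"
  obtains q where "max_moved n p q"
proof -
  obtain q where "p q = Suc n"
    using permutes_surj[OF assms(1)] by (metis surjD)
  then have "max_moved n p q"
    using assms by unfold_locales auto
  then show ?thesis ..
qed

lemma align_gap_remove_max: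
  assumes "p permutes {1..Suc n}"
  shows "align_gap n (remove_max (Suc n) p) \<le> align_gap (Suc n) p \<and>
    (align_gap (Suc n) p = align_gap n (remove_max (Suc n) p) \<longleftrightarrow> max_at_record (Suc n) p)"
proof (cases "p (Suc n) = Suc n")
  case True
  have "p j \<noteq> Suc n" if "j \<in> {1..<Suc n}" for j
    using that True injD[OF permutes_inj[OF assms], of j "Suc n"] by auto
  then have "max_at_record (Suc n) p"
    unfolding max_at_record_def by blast
  moreover have "align_gap (Suc n) p = align_gap n (remove_max (Suc n) p)"
    using True align_gap_fixed_max remove_max_permutes[OF assms] by (simp add: remove_max_fixed)
  ultimately show ?thesis
    by simp
next
  case False
  obtain q where "max_moved n p q"
    using assms False by (rule obtain_max_moved)
  then interpret max_moved n p q .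
  show ?thesis
    using align_gap_remove_max_le align_gap_remove_max_eq_iff by simp
qed

section \<open>Extremal permutations and their records\<close>

lemma align_gap_nonneg: "p permutes {1..n} \<Longrightarrow> 0 \<le> align_gap n p"
proof (induction n arbitrary: p)
  case 0
  have "alignments 0 p = {}" "weak_excedences 0 p = {}"
    unfolding alignments_def weak_excedences_def by auto
  then show ?case by (simp add: align_gap_def)
next
  case (Suc n)
  then show ?case
    using align_gap_remove_max[OF Suc.prems] Suc.IH[OF remove_max_permutes[OF Suc.prems]]
    by linarith
qed

definition tight :: "nat \<Rightarrow> (nat \<Rightarrow> nat) \<Rightarrow> bool" where
  "tight n p \<longleftrightarrow> p permutes {1..n} \<and> align_gap n p = 0"

lemma tight_Suc_iff:
  assumes "p permutes {1..Suc n}"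
  shows "tight (Suc n) p \<longleftrightarrow> tight n (remove_max (Suc n) p) \<and> max_at_record (Suc n) p"
proof -
  have "0 \<le> align_gap n (remove_max (Suc n) p)"
    using align_gap_nonneg[OF remove_max_permutes[OF assms]] .
  then show ?thesis
    using align_gap_remove_max[OF assms] remove_max_permutes[OF assms] assms
    unfolding tight_def by (metis antisym)
qed

lemma max_alignments_iff_tight:
  assumes "n \<ge> 1" "p permutes {1..n}"
  shows "card (alignments n p) = (card (weak_excedences n p) - 1) * (n - card (weak_excedences n p))
     \<longleftrightarrow> tight n p"
proof -
  have "p 1 \<in> {1..n}"
    using assms permutes_in_image[OF assms(2), of 1] by simp
  then have "1 \<in> weak_excedences n p"
    using assms(1) unfolding weak_excedences_def by simp
  moreover have "finite (weak_excedences n p)"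
    by (simp add: weak_excedences_def)
  ultimately have "1 \<le> card (weak_excedences n p)"
    by (auto simp: Suc_le_eq card_gt_0_iff)
  moreover have "card (weak_excedences n p) \<le> card {1..n}"
    by (rule card_mono) (auto simp: weak_excedences_def)
  ultimately have "int ((card (weak_excedences n p) - 1) * (n - card (weak_excedences n p)))
      = (int (card (weak_excedences n p)) - 1) * (int n - int (card (weak_excedences n p)))"
    by (simp add: of_nat_diff)
  then show ?thesis
    using assms(2) unfolding tight_def align_gap_def by linarith
qed

definition records :: "nat \<Rightarrow> (nat \<Rightarrow> nat) \<Rightarrow> nat set" where
  "records n p = {q\<in>{1..n}. q \<le> p q \<and> (\<forall>j\<in>{1..<q}. p j < p q)}"

lemma finite_records [simp]: "finite (records n p)"
  unfolding records_def by simp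

lemma card_records_le: "card (records n p) \<le> n"
proof -
  have "card (records n p) \<le> card {1..n}"
    by (rule card_mono) (auto simp: records_def)
  then show ?thesis by simp
qed

lemma one_in_records: "n \<ge> 1 \<Longrightarrow> p permutes {1..n} \<Longrightarrow> 1 \<in> records n p"
  using permutes_in_image[of p "{1..n}" 1] unfolding records_def by simp

lemma records_fixed_max:
  assumes "p permutes {1..n}"
  shows "records (Suc n) p = insert (Suc n) (records n p)"
proof (rule set_eqI)
  fix x
  have "p j < Suc n" if "j \<in> {1..<Suc n}" for j
  proof -
    have "p j \<in> {1..n}" using that permutes_in_image[OF assms, of j] by simp
    then show ?thesis by simp
  qed
  moreover have "p (Suc n) = Suc n"
    using assms by (simp add: permutes_not_in)
  ultimately have "Suc n \<in> records (Suc n) p"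
    unfolding records_def by simp
  then show "x \<in> records (Suc n) p \<longleftrightarrow> x \<in> insert (Suc n) (records n p)"
    by (cases "x = Suc n") (simp_all add: records_def le_Suc_eq)
qed

text \<open>The inverse of \<open>remove_max\<close>: inserts \<open>N\<close> into the cycle of \<open>s\<close> right after \<open>q\<close>.\<close>

definition insert_max :: "nat \<Rightarrow> (nat \<Rightarrow> nat) \<Rightarrow> nat \<Rightarrow> nat \<Rightarrow> nat" where
  "insert_max N s q = s \<circ> transpose q N"

lemma insert_max_cancel: "insert_max N s q \<circ> transpose q N = s"
  unfolding insert_max_def by (simp add: comp_assoc)

context max_moved
begin

lemma records_Suc: "records (Suc n) p = insert q {x\<in>records n s. x < q}"
proof (rule set_eqI)
  fix x
  show "x \<in> records (Suc n) p \<longleftrightarrow> x \<in> insert q {x\<in>records n s. x < q}"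
  proof (cases x q rule: linorder_cases)
    case less
    then have "s j = p j" if "j \<le> x" for j
      using that q_in s_other[of j] by simp
    then show ?thesis
      using less q_in unfolding records_def by auto
  next
    case equal
    have "p j < Suc n" if "j \<in> {1..<q}" for j
      using that q_in p_other[of j] by auto
    then show ?thesis
      using equal q_in p_q unfolding records_def by auto
  next
    case greater
    have "x \<notin> records (Suc n) p"
    proof
      assume x: "x \<in> records (Suc n) p"
      then have "p q < p x"
        using greater q_in unfolding records_def by auto
      moreover have "p x \<le> Suc n"
        using x p_in[of x] unfolding records_def by auto
      ultimately show False
        using p_q by simp
    qed
    then show ?thesis using greater by auto
  qed
qed

lemma max_at_record_iff_records: "max_at_record (Suc n) p \<longleftrightarrow> q \<in> records n s"
proof -
  have "s j = p j" if "j < q" for j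
    using that q_in s_other[of j] by simp
  then show ?thesis
    unfolding max_at_record_iff records_def using q_in s_q by auto
qed

lemma insert_max_remove_max: "insert_max (Suc n) s q = p"
proof
  fix i
  have "s (Suc n) = Suc n"
    unfolding remove_max_apply using r_in by simp
  then show "insert_max (Suc n) s q i = p i"
    unfolding insert_max_def using p_q s_q s_other[of i] by (auto simp: transpose_def)
qed

end

lemma max_moved_insert_max:
  assumes "s permutes {1..n}" "q \<in> {1..n}"
  shows "max_moved n (insert_max (Suc n) s q) q"
proof
  have s_Suc: "s permutes {1..Suc n}"
    using assms(1) by (rule permutes_subset) auto
  show "insert_max (Suc n) s q permutes {1..Suc n}"
    unfolding insert_max_def
    by (rule permutes_compose[OF permutes_swap_id s_Suc]) (use assms(2) in auto)
  show "insert_max (Suc n) s q q = Suc n"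
    unfolding insert_max_def using assms(1) by (simp add: permutes_not_in)
  show "q \<noteq> Suc n" using assms(2) by simp
qed

lemma remove_max_insert_max:
  assumes "s permutes {1..n}" "q \<in> {1..n}"
  shows "remove_max (Suc n) (insert_max (Suc n) s q) = s"
proof -
  interpret max_moved n "insert_max (Suc n) s q" q
    using assms by (rule max_moved_insert_max)
  show ?thesis
    using insert_max_remove_max insert_max_cancel by metis
qed

lemma tight_Suc_fixed:
  assumes "tight n s"
  shows "tight (Suc n) s" "remove_max (Suc n) s = s"
    "card (records (Suc n) s) = Suc (card (records n s))"
proof -
  have s: "s permutes {1..n}" using assms unfolding tight_def by simp
  have "s permutes {1..Suc n}" using s by (rule permutes_subset) auto
  then show "tight (Suc n) s"
    using assms align_gap_fixed_max[OF s] unfolding tight_def by simp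
  show "remove_max (Suc n) s = s"
    by (rule remove_max_fixed) (simp add: permutes_not_in[OF s])
  have "Suc n \<notin> records n s" unfolding records_def by simp
  then show "card (records (Suc n) s) = Suc (card (records n s))"
    unfolding records_fixed_max[OF s] by simp
qed

lemma tight_Suc_insert_max:
  assumes "tight n s" "q \<in> records n s"
  shows "tight (Suc n) (insert_max (Suc n) s q)" "remove_max (Suc n) (insert_max (Suc n) s q) = s"
    "card (records (Suc n) (insert_max (Suc n) s q)) = Suc (rank (records n s) q)"
proof -
  have s: "s permutes {1..n}" using assms unfolding tight_def by simp
  have q: "q \<in> {1..n}" using assms(2) unfolding records_def by simp
  interpret max_moved n "insert_max (Suc n) s q" q
    using s q by (rule max_moved_insert_max)
  show rm: "remove_max (Suc n) (insert_max (Suc n) s q) = s"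
    using s q by (rule remove_max_insert_max)
  show "tight (Suc n) (insert_max (Suc n) s q)"
    using tight_Suc_iff[OF perm] max_at_record_iff_records assms unfolding rm by simp
  have "q \<notin> {x\<in>records n s. x < q}" by simp
  then show "card (records (Suc n) (insert_max (Suc n) s q)) = Suc (rank (records n s) q)"
    unfolding records_Suc rm rank_def by simp
qed

lemma tight_Suc_cases:
  assumes "tight (Suc n) p"
  obtains (fixed) "p = remove_max (Suc n) p"
      "card (records (Suc n) p) = Suc (card (records n (remove_max (Suc n) p)))"
  | (inserted) q where "q \<in> records n (remove_max (Suc n) p)"
      "p = insert_max (Suc n) (remove_max (Suc n) p) q"
      "card (records (Suc n) p) = Suc (rank (records n (remove_max (Suc n) p)) q)"
proof -
  let ?s = "remove_max (Suc n) p"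
  have perm: "p permutes {1..Suc n}" using assms unfolding tight_def by simp
  have s: "tight n ?s" "max_at_record (Suc n) p"
    using tight_Suc_iff[OF perm] assms by simp_all
  show ?thesis
  proof (cases "p (Suc n) = Suc n")
    case True
    then have "p = ?s" by (simp add: remove_max_fixed)
    then show ?thesis using fixed s tight_Suc_fixed(3) by metis
  next
    case False
    obtain q where "max_moved n p q"
      using perm False by (rule obtain_max_moved)
    then interpret max_moved n p q .
    have "q \<in> records n ?s" "p = insert_max (Suc n) ?s q"
      using s(2) max_at_record_iff_records insert_max_remove_max by simp_all
    then show ?thesis using inserted s tight_Suc_insert_max(3) by metis
  qed
qed

lemma tight_Suc_inj:
  assumes "tight (Suc n) p1" "tight (Suc n) p2"
    and "remove_max (Suc n) p1 = remove_max (Suc n) p2"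
    and "card (records (Suc n) p1) = card (records (Suc n) p2)"
  shows "p1 = p2"
proof -
  define s where "s = remove_max (Suc n) p2"
  let ?L = "records n s"
  txt \<open>Fixing the maximum gives \<open>Suc (card ?L)\<close> records, inserting it after \<open>q\<close> gives
    the smaller number \<open>Suc (rank ?L q)\<close>, and \<open>rank ?L\<close> is injective on \<open>?L\<close>.\<close>
  have rank_L: "bij_betw (rank ?L) ?L {..<card ?L}"
    by (rule bij_betw_rank) simp
  have "rank ?L q < card ?L" if "q \<in> ?L" for q
    using bij_betw_apply[OF rank_L that] by simp
  moreover have "inj_on (rank ?L) ?L"
    using rank_L by (rule bij_betw_imp_inj_on)
  ultimately show ?thesis
    using assms(4)
    by (cases rule: tight_Suc_cases[OF assms(1)]; cases rule: tight_Suc_cases[OF assms(2)])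
      (simp_all add: assms(3) flip: s_def; metis inj_onD less_irrefl)+
qed

lemma bij_betw_remove_max_tight:
  assumes "1 \<le> t"
  shows "bij_betw (remove_max (Suc n)) {p. tight (Suc n) p \<and> card (records (Suc n) p) = t}
           {s. tight n s \<and> t \<le> Suc (card (records n s))}"
proof (rule bij_betw_imageI)
  show "inj_on (remove_max (Suc n)) {p. tight (Suc n) p \<and> card (records (Suc n) p) = t}"
    using tight_Suc_inj by (intro inj_onI) auto
next
  show "remove_max (Suc n) ` {p. tight (Suc n) p \<and> card (records (Suc n) p) = t}
      = {s. tight n s \<and> t \<le> Suc (card (records n s))}"
  proof (intro equalityI subsetI)
    fix s assume "s \<in> remove_max (Suc n) ` {p. tight (Suc n) p \<and> card (records (Suc n) p) = t}"
    then obtain p where p: "tight (Suc n) p" "card (records (Suc n) p) = t" "s = remove_max (Suc n) p"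
      by blast
    have "tight n s"
      using p tight_Suc_iff unfolding tight_def by blast
    moreover have "t \<le> Suc (card (records n s))"
      using p(1)
    proof (cases rule: tight_Suc_cases)
      case (inserted q)
      have "rank (records n s) q < card (records n s)"
        using bij_betw_apply[OF bij_betw_rank[OF finite_records]] inserted(1) p(3) by fastforce
      then show ?thesis using inserted(3) p by simp
    qed (use p in simp)
    ultimately show "s \<in> {s. tight n s \<and> t \<le> Suc (card (records n s))}" by simp
  next
    fix s assume s: "s \<in> {s. tight n s \<and> t \<le> Suc (card (records n s))}"
    show "s \<in> remove_max (Suc n) ` {p. tight (Suc n) p \<and> card (records (Suc n) p) = t}"
    proof (cases "t = Suc (card (records n s))")
      case True
      then show ?thesis
        using s tight_Suc_fixed[of n s] by (intro image_eqI[of _ _ s]) auto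
    next
      case False
      then have "t - 1 \<in> rank (records n s) ` records n s"
        using s assms bij_betw_imp_surj_on[OF bij_betw_rank[OF finite_records]] by auto
      then obtain q where "q \<in> records n s" "rank (records n s) q = t - 1"
        by (metis imageE)
      then show ?thesis
        using s assms tight_Suc_insert_max[of n s q]
        by (intro image_eqI[of _ _ "insert_max (Suc n) s q"]) auto
    qed
  qed
qed

section \<open>Counting extremal permutations\<close>

lemma finite_tight: "finite {p. tight n p}"
  by (rule finite_subset[of _ "{p. p permutes {1..n}}"]) (auto simp: tight_def finite_permutations)

definition tight_count :: "nat \<Rightarrow> nat \<Rightarrow> nat" where
  "tight_count n t = card {p. tight n p \<and> t \<le> card (records n p)}"

lemma tight_count_Suc:
  assumes "1 \<le> t"
  shows "tight_count (Suc n) t = tight_count n (t - 1) + tight_count (Suc n) (Suc t)"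
proof -
  let ?E = "{p. tight (Suc n) p \<and> card (records (Suc n) p) = t}"
  let ?G = "{p. tight (Suc n) p \<and> Suc t \<le> card (records (Suc n) p)}"
  have "{p. tight (Suc n) p \<and> t \<le> card (records (Suc n) p)} = ?E \<union> ?G"
    by auto
  moreover have "card (?E \<union> ?G) = card ?E + card ?G"
    by (rule card_Un_disjoint) (auto intro: rev_finite_subset[OF finite_tight])
  moreover have "card ?E = card {s. tight n s \<and> t \<le> Suc (card (records n s))}"
    using assms by (rule bij_betw_same_card[OF bij_betw_remove_max_tight])
  moreover have "{s. tight n s \<and> t \<le> Suc (card (records n s))}
      = {s. tight n s \<and> t - 1 \<le> card (records n s)}"
    using assms by auto
  ultimately show ?thesis
    unfolding tight_count_def by simp
qed

lemma tight_count_eq_0: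
  assumes "m < t"
  shows "tight_count m t = 0"
proof -
  have "\<not> t \<le> card (records m p)" for p
    using card_records_le[of m p] assms by linarith
  then show ?thesis unfolding tight_count_def by simp
qed

lemma tight_count_0:
  assumes "1 \<le> m"
  shows "tight_count m 0 = tight_count m 1"
proof -
  have "1 \<le> card (records m p)" if "tight m p" for p
  proof -
    have "records m p \<noteq> {}"
      using one_in_records[OF assms] that unfolding tight_def by blast
    then show ?thesis by (simp add: Suc_le_eq card_gt_0_iff)
  qed
  then have "{p. tight m p \<and> 0 \<le> card (records m p)} = {p. tight m p \<and> 1 \<le> card (records m p)}"
    by auto
  then show ?thesis unfolding tight_count_def by simp
qed

lemma tight_one_iff: "tight 1 p \<longleftrightarrow> p = id"
proof -
  have "alignments 1 id = {}" "weak_excedences 1 id = {1}"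
    unfolding alignments_def aligned_def weak_excedences_def by auto
  then have "tight 1 id"
    unfolding tight_def align_gap_def by simp
  moreover have "p = id" if "tight 1 p" for p
    using that unfolding tight_def by simp
  ultimately show ?thesis by blast
qed

lemma records_one_id: "records 1 id = {1}"
  unfolding records_def by auto

definition ballot :: "nat \<Rightarrow> nat \<Rightarrow> int" where
  "ballot n t = int ((2 * n - t) choose n) - int ((2 * n - t) choose Suc n)"

lemma ballot_Suc:
  assumes "1 \<le> t" "t \<le> 2 * n + 1"
  shows "ballot (Suc n) t = ballot n (t - 1) + ballot (Suc n) (Suc t)"
proof -
  define m where "m = 2 * n + 1 - t"
  have "2 * n - (t - 1) = m" "2 * Suc n - Suc t = m" "2 * Suc n - t = Suc m"
    using assms unfolding m_def by auto
  then show ?thesis unfolding ballot_def by simp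
qed

lemma ballot_0:
  assumes "1 \<le> n"
  shows "ballot n 0 = ballot n 1"
proof -
  obtain k where k: "n = Suc k" using assms by (cases n) auto
  have "2 * n - 0 = Suc (Suc (2 * k))" "2 * n - 1 = Suc (2 * k)"
    unfolding k by simp_all
  moreover have "Suc (2 * k) choose k = Suc (2 * k) choose Suc k"
    using binomial_symmetric[of k "Suc (2 * k)"] by simp
  ultimately show ?thesis unfolding ballot_def k by simp
qed

lemma ballot_Suc_self: "1 \<le> n \<Longrightarrow> ballot n (Suc n) = 0"
  unfolding ballot_def by (simp add: binomial_eq_0)

text \<open>For \<open>n = 0\<close> the truncated subtraction makes \<open>ballot 0 1 = 1\<close>, hence \<open>1 \<le> n\<close> below.\<close>

lemma tight_count_eq_ballot:
  assumes "1 \<le> n" "t \<le> Suc n"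
  shows "int (tight_count n t) = ballot n t"
  using assms
proof (induction n arbitrary: t rule: nat_induct_at_least)
  case base
  have "{p. tight 1 p \<and> t \<le> card (records 1 p)} = (if t \<le> 1 then {id} else {})"
    using tight_one_iff records_one_id by auto
  then have "tight_count 1 t = (if t \<le> 1 then 1 else 0)"
    unfolding tight_count_def by simp
  moreover have "t = 0 \<or> t = 1 \<or> t = 2" using base by auto
  ultimately show ?case unfolding ballot_def by (auto simp: numeral_2_eq_2)
next
  case (Suc n)
  show ?case
    using Suc.prems
  proof (induction t rule: inc_induct)
    case base
    then show ?case
      using tight_count_eq_0[of "Suc n"] ballot_Suc_self[of "Suc n"] by simp
  next
    case (step t)
    show ?case
    proof (cases "t = 0")
      case True
      then show ?thesis
        using step.IH tight_count_0[of "Suc n"] ballot_0[of "Suc n"] by simp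
    next
      case False
      then show ?thesis
        using step.IH step.hyps Suc.IH[of "t - 1"] tight_count_Suc[of t n] ballot_Suc[of t n]
        by simp
    qed
  qed
qed

lemma card_tight:
  assumes "1 \<le> n"
  shows "n * card {p. tight n p} = (2 * n) choose (n + 1)"
proof -
  define X Y where "X = int ((2 * n) choose Suc n)" and "Y = int ((2 * n) choose n)"
  have "card {p. tight n p} = tight_count n 0"
    unfolding tight_count_def by simp
  then have "int (card {p. tight n p}) = Y - X"
    using tight_count_eq_ballot[OF assms, of 0] unfolding ballot_def X_def Y_def by simp
  moreover have "int n * X + X = int n * Y"
    using arg_cong[OF Suc_times_binomial_double[of n], of int] unfolding X_def Y_def
    by (simp add: algebra_simps)
  ultimately have "int (n * card {p. tight n p}) = int ((2 * n) choose (n + 1))"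
    unfolding X_def by (simp add: right_diff_distrib)
  then show ?thesis
    by (simp only: of_nat_eq_iff)
qed

theorem mainTheorem15:
  fixes n :: nat
  assumes "n \<ge> 1"
  shows "real (card {\<pi>. \<pi> permutes {1..n} \<and>
            card (alignments n \<pi>) =
              (card (weak_excedences n \<pi>) - 1) * (n - card (weak_excedences n \<pi>))})
         = real ((2 * n) choose (n + 1)) / real n"
proof -
  have "{\<pi>. \<pi> permutes {1..n} \<and>
            card (alignments n \<pi>) =
              (card (weak_excedences n \<pi>) - 1) * (n - card (weak_excedences n \<pi>))} = {p. tight n p}"
    using max_alignments_iff_tight[OF assms] unfolding tight_def by blast
  moreover have "real n * real (card {p. tight n p}) = real ((2 * n) choose (n + 1))"
    using card_tight[OF assms] by (metis of_nat_mult)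
  ultimately show ?thesis
    using assms by (simp add: field_simps)
qed

end
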